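(* Let $\Gamma$ be a distance-regular graph with valency $k$ and smallest eigenvalue $\theta_{\min}$. If $\Gamma$ has the SPLS$(s)$ property for an integer $s\ge2$, then $-\theta_{\min}\le s$, and if equality holds then $\Gamma$ is geometric. Moreover, if $\sigma$ is the smallest integer such that $\Gamma$ has the SPLS$(\sigma)$ property, then $\sigma(a_1+1)-k\le(c_2-1)\binom{\sigma}{2}$ and $\sigma\ge-\theta_{\min}$.
   Context: $\Gamma$ is distance-regular of diameter at least 2 with intersection numbers $b_i,c_i$, $k=b_0$, $a_i=k-b_i-c_i$. Partial linear space: points and lines, any two distinct points on at most one common line; point graph: points adjacent iff on a common line. $\tau(X)$: maximum over non-incident point $x$ and line $\ell$ of the number of points of $\ell$ collinear with $x$. For integers $c\ge1,s\ge2$, $\Gamma$ has the SPLS$(c,s)$ property if $\Gamma$ is the point graph of a partial linear space $X=(V(\Gamma),\mathcal L,\in)$ with $\mathcal L$ the set of all maximal cliques with at least $a_1+2-(c-1)(s-1)$ vertices, $a_1\ge(2s-1)(c-1)$, each vertex on at most $s$ lines, and $\tau(X)\le c$; SPLS$(s)$ means SPLS$(c_2,s)$. A Delsarte clique is a clique with $1+\frac{k}{-\theta_{\min}}$ vertices; $\Gamma$ is geometric if there is a set of Delsarte cliques such that every edge lies in exactly one of them. *)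

theory Defs
  imports Complex_Main
begin

definition graph :: "'a set \<Rightarrow> ('a \<Rightarrow> 'a \<Rightarrow> bool) \<Rightarrow> bool" where
  "graph V E \<longleftrightarrow> finite V \<and> (\<forall>x y. E x y \<longrightarrow> x \<in> V \<and> y \<in> V) \<and>
     (\<forall>x y. E x y \<longrightarrow> E y x) \<and> (\<forall>x. \<not> E x x)"

fun reach :: "'a set \<Rightarrow> ('a \<Rightarrow> 'a \<Rightarrow> bool) \<Rightarrow> nat \<Rightarrow> 'a \<Rightarrow> 'a \<Rightarrow> bool" where
  "reach V E 0 x y = (x = y)"
| "reach V E (Suc n) x y = (reach V E n x y \<or> (\<exists>z\<in>V. reach V E n x z \<and> E z y))"

definition gdist :: "'a set \<Rightarrow> ('a \<Rightarrow> 'a \<Rightarrow> bool) \<Rightarrow> 'a \<Rightarrow> 'a \<Rightarrow> nat" where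
  "gdist V E x y = (LEAST n. reach V E n x y)"

definition connected_graph :: "'a set \<Rightarrow> ('a \<Rightarrow> 'a \<Rightarrow> bool) \<Rightarrow> bool" where
  "connected_graph V E \<longleftrightarrow> (\<forall>x\<in>V. \<forall>y\<in>V. \<exists>n. reach V E n x y)"

definition c_set :: "'a set \<Rightarrow> ('a \<Rightarrow> 'a \<Rightarrow> bool) \<Rightarrow> 'a \<Rightarrow> 'a \<Rightarrow> 'a set" where
  "c_set V E x y = {z \<in> V. E y z \<and> gdist V E x z + 1 = gdist V E x y}"

definition b_set :: "'a set \<Rightarrow> ('a \<Rightarrow> 'a \<Rightarrow> bool) \<Rightarrow> 'a \<Rightarrow> 'a \<Rightarrow> 'a set" where
  "b_set V E x y = {z \<in> V. E y z \<and> gdist V E x z = gdist V E x y + 1}"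

definition distance_regular :: "'a set \<Rightarrow> ('a \<Rightarrow> 'a \<Rightarrow> bool) \<Rightarrow> bool" where
  "distance_regular V E \<longleftrightarrow> graph V E \<and> V \<noteq> {} \<and> connected_graph V E \<and>
     (\<forall>x\<in>V. \<forall>y\<in>V. \<forall>x'\<in>V. \<forall>y'\<in>V. gdist V E x y = gdist V E x' y' \<longrightarrow>
        card (c_set V E x y) = card (c_set V E x' y') \<and>
        card (b_set V E x y) = card (b_set V E x' y'))"

definition diameter_ge2 :: "'a set \<Rightarrow> ('a \<Rightarrow> 'a \<Rightarrow> bool) \<Rightarrow> bool" where
  "diameter_ge2 V E \<longleftrightarrow> (\<exists>x\<in>V. \<exists>y\<in>V. gdist V E x y \<ge> 2)"

text \<open>Intersection numbers, read off at some pair at distance i (well defined for a DRG).\<close>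
definition dpair :: "'a set \<Rightarrow> ('a \<Rightarrow> 'a \<Rightarrow> bool) \<Rightarrow> nat \<Rightarrow> 'a \<times> 'a" where
  "dpair V E i = (SOME p. fst p \<in> V \<and> snd p \<in> V \<and> gdist V E (fst p) (snd p) = i)"

definition int_c :: "'a set \<Rightarrow> ('a \<Rightarrow> 'a \<Rightarrow> bool) \<Rightarrow> nat \<Rightarrow> nat" where
  "int_c V E i = card (c_set V E (fst (dpair V E i)) (snd (dpair V E i)))"

definition int_b :: "'a set \<Rightarrow> ('a \<Rightarrow> 'a \<Rightarrow> bool) \<Rightarrow> nat \<Rightarrow> nat" where
  "int_b V E i = card (b_set V E (fst (dpair V E i)) (snd (dpair V E i)))"

definition valency :: "'a set \<Rightarrow> ('a \<Rightarrow> 'a \<Rightarrow> bool) \<Rightarrow> nat" where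
  "valency V E = int_b V E 0"

definition int_a :: "'a set \<Rightarrow> ('a \<Rightarrow> 'a \<Rightarrow> bool) \<Rightarrow> nat \<Rightarrow> int" where
  "int_a V E i = int (valency V E) - int (int_b V E i) - int (int_c V E i)"

text \<open>Eigenvalues of the adjacency matrix (as eigenvalues of the adjacency operator on
  real functions on V).\<close>
definition adj_eigenvalue :: "'a set \<Rightarrow> ('a \<Rightarrow> 'a \<Rightarrow> bool) \<Rightarrow> real \<Rightarrow> bool" where
  "adj_eigenvalue V E \<theta> \<longleftrightarrow> (\<exists>f :: 'a \<Rightarrow> real. (\<exists>x\<in>V. f x \<noteq> 0) \<and>
      (\<forall>x\<in>V. (\<Sum>y\<in>{y\<in>V. E x y}. f y) = \<theta> * f x))"

definition theta_min :: "'a set \<Rightarrow> ('a \<Rightarrow> 'a \<Rightarrow> bool) \<Rightarrow> real" where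
  "theta_min V E = Min {\<theta>. adj_eigenvalue V E \<theta>}"

definition clique :: "'a set \<Rightarrow> ('a \<Rightarrow> 'a \<Rightarrow> bool) \<Rightarrow> 'a set \<Rightarrow> bool" where
  "clique V E C \<longleftrightarrow> C \<subseteq> V \<and> (\<forall>x\<in>C. \<forall>y\<in>C. x \<noteq> y \<longrightarrow> E x y)"

definition maximal_clique :: "'a set \<Rightarrow> ('a \<Rightarrow> 'a \<Rightarrow> bool) \<Rightarrow> 'a set \<Rightarrow> bool" where
  "maximal_clique V E C \<longleftrightarrow> clique V E C \<and> (\<forall>D. clique V E D \<and> C \<subseteq> D \<longrightarrow> D = C)"

definition delsarte_clique :: "'a set \<Rightarrow> ('a \<Rightarrow> 'a \<Rightarrow> bool) \<Rightarrow> 'a set \<Rightarrow> bool" where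
  "delsarte_clique V E C \<longleftrightarrow> clique V E C \<and>
     real (card C) = 1 + real (valency V E) / (- theta_min V E)"

definition geometric :: "'a set \<Rightarrow> ('a \<Rightarrow> 'a \<Rightarrow> bool) \<Rightarrow> bool" where
  "geometric V E \<longleftrightarrow> (\<exists>\<C>. (\<forall>C\<in>\<C>. delsarte_clique V E C) \<and>
      (\<forall>x y. E x y \<longrightarrow> (\<exists>!C. C \<in> \<C> \<and> x \<in> C \<and> y \<in> C)))"

definition spls_lines :: "'a set \<Rightarrow> ('a \<Rightarrow> 'a \<Rightarrow> bool) \<Rightarrow> nat \<Rightarrow> nat \<Rightarrow> 'a set set" where
  "spls_lines V E c s = {C. maximal_clique V E C \<and>
      int (card C) \<ge> int_a V E 1 + 2 - (int c - 1) * (int s - 1)}"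

definition SPLS :: "'a set \<Rightarrow> ('a \<Rightarrow> 'a \<Rightarrow> bool) \<Rightarrow> nat \<Rightarrow> nat \<Rightarrow> bool" where
  "SPLS V E c s \<longleftrightarrow> c \<ge> 1 \<and> s \<ge> 2 \<and>
    (let L = spls_lines V E c s in
      \<comment> \<open>partial linear space: two distinct points on at most one common line\<close>
      (\<forall>x\<in>V. \<forall>y\<in>V. x \<noteq> y \<longrightarrow> card {l \<in> L. x \<in> l \<and> y \<in> l} \<le> 1) \<and>
      \<comment> \<open>Gamma is the point graph\<close>
      (\<forall>x\<in>V. \<forall>y\<in>V. x \<noteq> y \<longrightarrow> (E x y \<longleftrightarrow> (\<exists>l\<in>L. x \<in> l \<and> y \<in> l))) \<and>
      int_a V E 1 \<ge> (2 * int s - 1) * (int c - 1) \<and>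
      (\<forall>x\<in>V. card {l \<in> L. x \<in> l} \<le> s) \<and>
      \<comment> \<open>tau(X) \<le> c: collinear = adjacent in the point graph\<close>
      (\<forall>x\<in>V. \<forall>l\<in>L. x \<notin> l \<longrightarrow> card {y \<in> l. E x y} \<le> c))"

definition SPLS_s :: "'a set \<Rightarrow> ('a \<Rightarrow> 'a \<Rightarrow> bool) \<Rightarrow> nat \<Rightarrow> bool" where
  "SPLS_s V E s \<longleftrightarrow> SPLS V E (int_c V E 2) s"

end

(* A theta-eigenvector g satisfies
     theta |g|^2 = (sum over lines l of (sum of g on l)^2) - (sum over x of r_x g(x)^2),
   where r_x <= s is the number of lines on x; hence theta_min >= -s.
   The Delsarte bound |C| <= 1 + k / (-theta_min) for cliques, proved with the cosine sequence
   of theta_min, together with k = sum over the lines l on x of (|l| - 1), shows that when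
   theta_min = -s every line has exactly 1 + k/s points: the lines are Delsarte cliques
   partitioning the edges.
   If sigma is minimal, some vertex x lies on sigma lines, for otherwise the same lines would
   witness SPLS(sigma - 1). Choose pairwise non-adjacent points y_l <> x on the lines l on x.
   Counting the a_1 common neighbours of x and y_l line by line, and bounding the contributions
   of two lines l, l' jointly by c_2 - 1 (y_l and y_l' are at distance 2 and both adjacent
   to x), gives sigma (a_1 + 1) - k <= (c_2 - 1) (sigma choose 2). *)

theory Submission
  imports Defs "Jordan_Normal_Form.Char_Poly"
begin

section \<open>Adjacency eigenvalues of a finite graph\<close>

lemma sum_nth_distinct:
  "distinct xs \<Longrightarrow> (\<Sum>j<length xs. g (xs ! j)) = (\<Sum>y\<in>set xs. g y)"
  by (simp add: bij_betw_nth sum.reindex_bij_betw)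

definition adjacency_mat :: "('a \<Rightarrow> 'a \<Rightarrow> bool) \<Rightarrow> 'a list \<Rightarrow> real mat" where
  "adjacency_mat E xs = mat (length xs) (length xs) (\<lambda>(i, j). if E (xs ! i) (xs ! j) then 1 else 0)"

lemma adj_eigenvalue_imp_eigenvalue:
  assumes xs: "set xs = V" "distinct xs" and \<theta>: "adj_eigenvalue V E \<theta>"
  shows "eigenvalue (adjacency_mat E xs) \<theta>"
proof -
  define n where "n = length xs"
  let ?A = "adjacency_mat E xs"
  have A: "?A \<in> carrier_mat n n" unfolding adjacency_mat_def n_def by simp
  obtain f :: "'a \<Rightarrow> real" where f: "\<exists>x\<in>V. f x \<noteq> 0"
    "\<forall>x\<in>V. (\<Sum>y\<in>{y\<in>V. E x y}. f y) = \<theta> * f x"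
    using \<theta> unfolding adj_eigenvalue_def by auto
  define v where "v = vec n (\<lambda>i. f (xs ! i))"
  have v: "v \<in> carrier_vec n" unfolding v_def by simp
  have "v \<noteq> 0\<^sub>v n"
  proof
    assume v0: "v = 0\<^sub>v n"
    obtain x where "x \<in> V" "f x \<noteq> 0" using f by auto
    then obtain i where "i < n" "xs ! i = x" using xs unfolding n_def by (metis in_set_conv_nth)
    then show False using v0 \<open>f x \<noteq> 0\<close> unfolding v_def by (metis index_vec index_zero_vec(1))
  qed
  moreover have "?A *\<^sub>v v = \<theta> \<cdot>\<^sub>v v"
  proof (rule eq_vecI)
    fix i assume "i < dim_vec (\<theta> \<cdot>\<^sub>v v)"
    then have i: "i < n" unfolding v_def by simp
    have "(?A *\<^sub>v v) $ i = (\<Sum>j<n. (if E (xs ! i) (xs ! j) then 1 else 0) * f (xs ! j))"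
      using i unfolding adjacency_mat_def v_def n_def
      by (simp add: mult_mat_vec_def scalar_prod_def lessThan_atLeast0)
    also have "\<dots> = (\<Sum>y\<in>V. (if E (xs ! i) y then 1 else 0) * f y)"
      using xs sum_nth_distinct[of xs "\<lambda>y. (if E (xs ! i) y then 1 else 0) * f y"]
      unfolding n_def by simp
    also have "\<dots> = (\<Sum>y\<in>{y\<in>V. E (xs ! i) y}. f y)"
      using finite_set[of xs] xs(1) by (simp add: sum.inter_filter, intro sum.cong, auto)
    also have "\<dots> = \<theta> * f (xs ! i)" using f(2) xs i unfolding n_def by auto
    finally show "(?A *\<^sub>v v) $ i = (\<theta> \<cdot>\<^sub>v v) $ i" using i unfolding v_def by simp
  qed (use A v in auto)
  ultimately show ?thesis unfolding eigenvalue_def eigenvector_def using A v by auto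
qed

lemma finite_adj_eigenvalues:
  assumes "finite V"
  shows "finite {\<theta>. adj_eigenvalue V E \<theta>}"
proof -
  obtain xs where xs: "set xs = V" "distinct xs" using assms finite_distinct_list by blast
  let ?A = "adjacency_mat E xs"
  have A: "?A \<in> carrier_mat (length xs) (length xs)" unfolding adjacency_mat_def by simp
  have "{\<theta>. adj_eigenvalue V E \<theta>} \<subseteq> {x. poly (char_poly ?A) x = 0}"
    using adj_eigenvalue_imp_eigenvalue[OF xs] eigenvalue_root_char_poly[OF A] by auto
  moreover have "char_poly ?A \<noteq> 0" using degree_monic_char_poly[OF A] by auto
  ultimately show ?thesis using poly_roots_finite finite_subset by blast
qed

locale finite_graph =
  fixes V :: "'a set" and E :: "'a \<Rightarrow> 'a \<Rightarrow> bool"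
  assumes graph: "graph V E"
begin

lemma finite_V: "finite V"
  using graph unfolding graph_def by auto

lemma adj_sym: "E x y \<Longrightarrow> E y x"
  using graph unfolding graph_def by auto

lemma adj_irrefl: "\<not> E x x"
  using graph unfolding graph_def by auto

lemma adj_in_V: "E x y \<Longrightarrow> x \<in> V \<and> y \<in> V"
  using graph unfolding graph_def by auto

definition nbrs :: "'a \<Rightarrow> 'a set" where
  "nbrs x = {y\<in>V. E x y}"

lemma finite_nbrs: "finite (nbrs x)"
  unfolding nbrs_def using finite_V by simp

definition in_eigenspace :: "('a \<Rightarrow> real) \<Rightarrow> real \<Rightarrow> bool" where
  "in_eigenspace g \<theta> \<longleftrightarrow> (\<forall>x\<in>V. (\<Sum>y\<in>nbrs x. g y) = \<theta> * g x)"

lemma adj_eigenvalue_iff: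
  "adj_eigenvalue V E \<theta> \<longleftrightarrow> (\<exists>g. in_eigenspace g \<theta> \<and> (\<exists>x\<in>V. g x \<noteq> 0))"
  unfolding adj_eigenvalue_def in_eigenspace_def nbrs_def by auto

lemma reach_trans: "reach V E m x y \<Longrightarrow> reach V E n y z \<Longrightarrow> reach V E (m + n) x z"
  by (induction n arbitrary: z) auto

lemma reach_adj: "E x y \<Longrightarrow> reach V E 1 x y"
  using adj_in_V by auto

end

section \<open>Distances in connected graphs\<close>

locale connected_finite_graph = finite_graph +
  assumes connected: "connected_graph V E"
begin

abbreviation d :: "'a \<Rightarrow> 'a \<Rightarrow> nat" where
  "d \<equiv> gdist V E"

lemma reach_gdist: "x \<in> V \<Longrightarrow> y \<in> V \<Longrightarrow> reach V E (d x y) x y"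
  using connected unfolding gdist_def connected_graph_def by (metis LeastI_ex)

lemma gdist_le: "reach V E n x y \<Longrightarrow> d x y \<le> n"
  unfolding gdist_def by (rule Least_le)

lemma gdist_self [simp]: "d x x = 0"
  using gdist_le[of 0 x x] by simp

lemma gdist_eq_0_iff: "x \<in> V \<Longrightarrow> y \<in> V \<Longrightarrow> d x y = 0 \<longleftrightarrow> x = y"
  using reach_gdist[of x y] by auto

lemma gdist_triangle: "x \<in> V \<Longrightarrow> y \<in> V \<Longrightarrow> z \<in> V \<Longrightarrow> d x z \<le> d x y + d y z"
  using reach_gdist gdist_le reach_trans by meson

lemma gdist_adj: "E x y \<Longrightarrow> d x y = 1"
proof -
  assume e: "E x y"
  then have "d x y \<le> 1" using gdist_le reach_adj by blast
  moreover have "x \<noteq> y" using e adj_irrefl by blast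
  then have "d x y \<noteq> 0" using gdist_eq_0_iff adj_in_V[OF e] by blast
  ultimately show ?thesis by simp
qed

lemma gdist_eq_1_iff:
  assumes "x \<in> V" "y \<in> V"
  shows "d x y = 1 \<longleftrightarrow> E x y"
proof
  assume d1: "d x y = 1"
  then have "reach V E 1 x y" using reach_gdist[OF assms] by metis
  moreover have "x \<noteq> y" using d1 by auto
  ultimately show "E x y" by simp
qed (rule gdist_adj)

lemma gdist_adj_le: "E y z \<Longrightarrow> x \<in> V \<Longrightarrow> d x z \<le> d x y + 1"
  using gdist_triangle[of x y z] gdist_adj[of y z] adj_in_V by auto

lemma gdist_SucE:
  assumes "x \<in> V" "y \<in> V" "d x y = Suc m"
  obtains z where "z \<in> V" "E y z" "d x z = m"
proof -
  have "reach V E (Suc m) x y" using reach_gdist assms by metis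
  moreover have "\<not> reach V E m x y" using gdist_le assms by fastforce
  ultimately obtain z where z: "z \<in> V" "reach V E m x z" "E z y" by auto
  then have "d x z \<le> m" using gdist_le by blast
  moreover have "d x y \<le> d x z + 1" using gdist_adj_le[OF z(3) assms(1)] .
  ultimately have "d x z = m" using assms(3) by simp
  then show ?thesis using that z(1) adj_sym[OF z(3)] by blast
qed

lemma gdist_intermediate:
  assumes x: "x \<in> V"
  shows "y \<in> V \<Longrightarrow> d x y = n \<Longrightarrow> i \<le> n \<Longrightarrow> \<exists>z\<in>V. d x z = i"
proof (induction n arbitrary: y)
  case 0
  then show ?case by auto
next
  case (Suc n)
  show ?case
  proof (cases "i = Suc n")
    case False
    obtain z where "z \<in> V" "d x z = n" using gdist_SucE[OF x Suc.prems(1,2)] by metis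
    with Suc.IH[of z] Suc.prems(3) False show ?thesis by simp
  qed (use Suc.prems in blast)
qed

definition diam :: nat where
  "diam = Max {d x y | x y. x \<in> V \<and> y \<in> V}"

lemma finite_gdists: "finite {d x y | x y. x \<in> V \<and> y \<in> V}"
proof -
  have "{d x y | x y. x \<in> V \<and> y \<in> V} = (\<lambda>(x, y). d x y) ` (V \<times> V)" by auto
  then show ?thesis using finite_V by simp
qed

lemma gdist_le_diam: "x \<in> V \<Longrightarrow> y \<in> V \<Longrightarrow> d x y \<le> diam"
  unfolding diam_def using finite_gdists by (intro Max_ge) auto

lemma exists_gdist_eq:
  assumes "V \<noteq> {}" "i \<le> diam"
  shows "\<exists>x\<in>V. \<exists>y\<in>V. d x y = i"
proof -
  have "diam \<in> {d x y | x y. x \<in> V \<and> y \<in> V}"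
    unfolding diam_def using finite_gdists assms(1) by (intro Max_in) auto
  then obtain x y where xy: "x \<in> V" "y \<in> V" "diam = d x y" by blast
  show ?thesis using gdist_intermediate[OF xy(1,2) xy(3)[symmetric] assms(2)] xy(1) by blast
qed

end

section \<open>Distance-regular graphs and the Delsarte bound\<close>

locale distance_regular_graph =
  fixes V :: "'a set" and E :: "'a \<Rightarrow> 'a \<Rightarrow> bool"
  assumes distance_regular: "distance_regular V E"
    and diameter_ge2: "diameter_ge2 V E"

sublocale distance_regular_graph \<subseteq> connected_finite_graph
  using distance_regular unfolding distance_regular_def by unfold_locales auto

context distance_regular_graph
begin

abbreviation k :: nat where
  "k \<equiv> valency V E"

lemma V_nonempty: "V \<noteq> {}"
  using distance_regular unfolding distance_regular_def by auto

lemma two_le_diam: "2 \<le> diam"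
  using diameter_ge2 gdist_le_diam unfolding diameter_ge2_def by force

lemma exists_pair_at_gdist: "i \<le> diam \<Longrightarrow> \<exists>x\<in>V. \<exists>y\<in>V. d x y = i"
  using exists_gdist_eq V_nonempty by blast

lemma dpair_gdist:
  assumes "i \<le> diam"
  shows "fst (dpair V E i) \<in> V \<and> snd (dpair V E i) \<in> V \<and> d (fst (dpair V E i)) (snd (dpair V E i)) = i"
proof -
  obtain x y where "x \<in> V" "y \<in> V" "d x y = i" using exists_pair_at_gdist assms by blast
  then have "\<exists>p. fst p \<in> V \<and> snd p \<in> V \<and> d (fst p) (snd p) = i" by (intro exI[of _ "(x, y)"]) auto
  then show ?thesis unfolding dpair_def by (rule someI_ex)
qed

lemma card_b_set: "x \<in> V \<Longrightarrow> y \<in> V \<Longrightarrow> card (b_set V E x y) = int_b V E (d x y)"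
  using dpair_gdist[OF gdist_le_diam] distance_regular unfolding distance_regular_def int_b_def by metis

lemma card_c_set: "x \<in> V \<Longrightarrow> y \<in> V \<Longrightarrow> card (c_set V E x y) = int_c V E (d x y)"
  using dpair_gdist[OF gdist_le_diam] distance_regular unfolding distance_regular_def int_c_def by metis

lemma card_nbrs: "x \<in> V \<Longrightarrow> card (nbrs x) = k"
proof -
  assume x: "x \<in> V"
  have "b_set V E x x = nbrs x" unfolding b_set_def nbrs_def using gdist_eq_1_iff x by auto
  then show ?thesis using card_b_set[OF x x] unfolding valency_def by simp
qed

lemma int_c_0: "int_c V E 0 = 0"
proof -
  obtain x where "x \<in> V" using V_nonempty by auto
  moreover have "c_set V E x x = {}" unfolding c_set_def by auto
  ultimately show ?thesis using card_c_set[of x x] by simp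
qed

lemma int_c_1: "int_c V E 1 = 1"
proof -
  obtain x y where xy: "x \<in> V" "y \<in> V" "d x y = 1"
    using exists_pair_at_gdist[of 1] two_le_diam by auto
  then have "c_set V E x y = {x}"
    unfolding c_set_def using xy gdist_eq_1_iff[OF xy(1,2)] gdist_eq_0_iff[OF xy(1)] adj_sym[of x y]
    by auto
  then have "card (c_set V E x y) = 1" by simp
  moreover have "card (c_set V E x y) = int_c V E 1" using card_c_set[OF xy(1,2)] xy(3) by simp
  ultimately show ?thesis by argo
qed

lemma valency_pos: "0 < k"
proof -
  obtain x y where xy: "x \<in> V" "y \<in> V" "d x y = 1"
    using exists_pair_at_gdist[of 1] two_le_diam by auto
  then have "y \<in> nbrs x" unfolding nbrs_def using gdist_eq_1_iff by auto
  then have "nbrs x \<noteq> {}" by blast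
  then show ?thesis using card_nbrs[OF xy(1)] finite_nbrs card_gt_0_iff by metis
qed

definition a_set :: "'a \<Rightarrow> 'a \<Rightarrow> 'a set" where
  "a_set x y = {z\<in>V. E y z \<and> d x z = d x y}"

lemma nbrs_split:
  assumes x: "x \<in> V"
  shows "nbrs y = c_set V E x y \<union> a_set x y \<union> b_set V E x y"
proof -
  have "d x z \<le> d x y + 1 \<and> d x y \<le> d x z + 1" if "E y z" for z
    using gdist_adj_le[OF that x] gdist_adj_le[OF adj_sym[OF that] x] by simp
  then show ?thesis unfolding nbrs_def c_set_def a_set_def b_set_def by force
qed

lemma card_a_set:
  assumes x: "x \<in> V" and y: "y \<in> V"
  shows "card (a_set x y) + int_b V E (d x y) + int_c V E (d x y) = k"
proof -
  have "finite (c_set V E x y)" "finite (a_set x y)" "finite (b_set V E x y)"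
    unfolding c_set_def a_set_def b_set_def using finite_V by auto
  moreover have "c_set V E x y \<inter> a_set x y = {}" "(c_set V E x y \<union> a_set x y) \<inter> b_set V E x y = {}"
    unfolding c_set_def a_set_def b_set_def by auto
  ultimately have "card (nbrs y) = card (c_set V E x y) + card (a_set x y) + card (b_set V E x y)"
    unfolding nbrs_split[OF x] by (simp add: card_Un_disjoint)
  then show ?thesis using card_nbrs y card_b_set[OF x y] card_c_set[OF x y] by simp
qed

lemma card_common_nbrs_adj: "E x y \<Longrightarrow> int (card (nbrs x \<inter> nbrs y)) = int_a V E 1"
proof -
  assume e: "E x y"
  have xy: "x \<in> V" "y \<in> V" using adj_in_V[OF e] by auto
  have d1: "d x y = 1" using gdist_adj[OF e] .
  have "d x z = 1 \<longleftrightarrow> E x z" if "z \<in> V" for z using gdist_eq_1_iff[OF xy(1) that] .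
  then have "a_set x y = nbrs x \<inter> nbrs y" unfolding a_set_def nbrs_def d1 by blast
  then show ?thesis using card_a_set[OF xy] d1 int_c_1 unfolding int_a_def by simp
qed

lemma card_common_nbrs_gdist_2:
  "y \<in> V \<Longrightarrow> z \<in> V \<Longrightarrow> d y z = 2 \<Longrightarrow> card (nbrs y \<inter> nbrs z) = int_c V E 2"
proof -
  assume a: "y \<in> V" "z \<in> V" "d y z = 2"
  have "c_set V E y z = nbrs y \<inter> nbrs z" unfolding c_set_def nbrs_def using a gdist_eq_1_iff by auto
  then show ?thesis using card_c_set[OF a(1,2)] a by simp
qed

lemma int_b_1_pos: "1 \<le> int_b V E 1"
proof -
  obtain x w where xw: "x \<in> V" "w \<in> V" "d x w = 2" using exists_pair_at_gdist two_le_diam by blast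
  then obtain y where y: "y \<in> V" "E w y" "d x y = 1" using gdist_SucE[of x w 1] by auto
  then have "w \<in> b_set V E x y" unfolding b_set_def using xw adj_sym by auto
  moreover have "finite (b_set V E x y)" unfolding b_set_def using finite_V by simp
  ultimately have "card (b_set V E x y) \<noteq> 0" by auto
  then show ?thesis using card_b_set[OF xw(1) y(1)] y by simp
qed

definition br :: "nat \<Rightarrow> real" where
  "br i = real (int_b V E i)"

definition cr :: "nat \<Rightarrow> real" where
  "cr i = real (int_c V E i)"

definition ar :: "nat \<Rightarrow> real" where
  "ar i = real k - br i - cr i"

lemma cr_0: "cr 0 = 0"
  unfolding cr_def using int_c_0 by simp

lemma sum_nbrs_gdist:
  assumes x: "x \<in> V" and z: "z \<in> V"
  shows "(\<Sum>y\<in>nbrs x. F (d z y))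
    = cr (d z x) * F (d z x - 1) + ar (d z x) * F (d z x) + br (d z x) * F (d z x + 1)"
proof -
  let ?C = "c_set V E z x" and ?A = "a_set z x" and ?B = "b_set V E z x" and ?j = "d z x"
  have const: "(\<And>y. y \<in> S \<Longrightarrow> F (d z y) = c) \<Longrightarrow> (\<Sum>y\<in>S. F (d z y)) = real (card S) * c" for S c
    by simp
  have fin: "finite ?C" "finite ?A" "finite ?B"
    unfolding c_set_def a_set_def b_set_def using finite_V by auto
  have "?C \<inter> ?A = {}" "(?C \<union> ?A) \<inter> ?B = {}"
    unfolding c_set_def a_set_def b_set_def by auto
  then have "(\<Sum>y\<in>nbrs x. F (d z y))
      = (\<Sum>y\<in>?C. F (d z y)) + (\<Sum>y\<in>?A. F (d z y)) + (\<Sum>y\<in>?B. F (d z y))"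
    unfolding nbrs_split[OF z] using fin by (simp add: sum.union_disjoint)
  also have "\<dots> = real (card ?C) * F (?j - 1) + real (card ?A) * F ?j + real (card ?B) * F (?j + 1)"
  proof -
    have "(\<Sum>y\<in>?C. F (d z y)) = real (card ?C) * F (?j - 1)"
      by (rule const) (auto simp: c_set_def intro!: arg_cong[where f = F])
    moreover have "(\<Sum>y\<in>?A. F (d z y)) = real (card ?A) * F ?j"
      by (rule const) (simp add: a_set_def)
    moreover have "(\<Sum>y\<in>?B. F (d z y)) = real (card ?B) * F (?j + 1)"
      by (rule const) (simp add: b_set_def)
    ultimately show ?thesis by simp
  qed
  also have "real (card ?A) = ar ?j"
    using card_a_set[OF z x] unfolding ar_def br_def cr_def by (simp add: algebra_simps flip: of_nat_add)
  finally show ?thesis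
    using card_b_set[OF z x] card_c_set[OF z x] unfolding br_def cr_def by simp
qed

definition sphere :: "'a \<Rightarrow> nat \<Rightarrow> 'a set" where
  "sphere x i = {y\<in>V. d x y = i}"

definition sphere_sum :: "('a \<Rightarrow> real) \<Rightarrow> 'a \<Rightarrow> nat \<Rightarrow> real" where
  "sphere_sum g x i = (\<Sum>y\<in>sphere x i. g y)"

lemma finite_sphere: "finite (sphere x i)"
  unfolding sphere_def using finite_V by simp

lemma sphere_0: "x \<in> V \<Longrightarrow> sphere x 0 = {x}"
  unfolding sphere_def using gdist_eq_0_iff by auto

lemma sphere_1: "x \<in> V \<Longrightarrow> sphere x 1 = nbrs x"
  unfolding sphere_def nbrs_def using gdist_eq_1_iff adj_in_V by auto

lemma sphere_beyond_diam: "x \<in> V \<Longrightarrow> diam < i \<Longrightarrow> sphere x i = {}"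
  unfolding sphere_def using gdist_le_diam by fastforce

lemma card_nbrs_in_sphere:
  assumes x: "x \<in> V" and z: "z \<in> V"
  shows "real (card {y\<in>nbrs z. d x y = i}) = (if d x z = i + 1 then cr (i + 1) else 0)
    + (if d x z = i then ar i else 0) + (if 0 < i \<and> d x z = i - 1 then br (i - 1) else 0)"
proof -
  have "real (card {y\<in>nbrs z. d x y = i}) = (\<Sum>y\<in>nbrs z. if d x y = i then 1 else 0)"
    using finite_nbrs by (simp add: sum.If_cases Int_def)
  also have "\<dots> = cr (d x z) * (if d x z - 1 = i then 1 else 0) + ar (d x z) * (if d x z = i then 1 else 0)
      + br (d x z) * (if d x z + 1 = i then 1 else 0)"
    by (rule sum_nbrs_gdist[OF z x])
  finally show ?thesis using cr_0 by (cases "d x z"; cases i) auto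
qed

lemma sphere_sum_recurrence:
  assumes g: "in_eigenspace g \<theta>" and x: "x \<in> V"
  shows "\<theta> * sphere_sum g x i = cr (i + 1) * sphere_sum g x (i + 1) + ar i * sphere_sum g x i
    + (if i = 0 then 0 else br (i - 1) * sphere_sum g x (i - 1))"
proof -
  have shell: "(\<Sum>z\<in>V. g z * (if d x z = m then \<alpha> else 0)) = \<alpha> * sphere_sum g x m" for m \<alpha>
    unfolding sphere_sum_def sphere_def using finite_V
    by (simp add: sum.inter_filter[symmetric] sum_distrib_left if_distrib mult.commute cong: if_cong)
  have "\<theta> * sphere_sum g x i = (\<Sum>y\<in>sphere x i. \<Sum>z\<in>nbrs y. g z)"
    using g unfolding sphere_sum_def in_eigenspace_def sphere_def by (simp add: sum_distrib_left)
  also have "\<dots> = (\<Sum>y\<in>sphere x i. \<Sum>z\<in>V. if E y z then g z else 0)"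
    unfolding nbrs_def using finite_V by (simp add: sum.inter_filter)
  also have "\<dots> = (\<Sum>z\<in>V. \<Sum>y\<in>sphere x i. if E y z then g z else 0)"
    by (rule sum.swap)
  also have "\<dots> = (\<Sum>z\<in>V. g z * real (card {y\<in>nbrs z. d x y = i}))"
  proof (rule sum.cong[OF refl])
    fix z assume "z \<in> V"
    have "{y\<in>sphere x i. E y z} = {y\<in>nbrs z. d x y = i}"
      unfolding sphere_def nbrs_def using adj_sym by auto
    then show "(\<Sum>y\<in>sphere x i. if E y z then g z else 0) = g z * real (card {y\<in>nbrs z. d x y = i})"
      using finite_sphere by (simp add: sum.If_cases Int_def)
  qed
  also have "\<dots> = (\<Sum>z\<in>V. g z * (if d x z = i + 1 then cr (i + 1) else 0))
      + (\<Sum>z\<in>V. g z * (if d x z = i then ar i else 0))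
      + (if i = 0 then 0 else (\<Sum>z\<in>V. g z * (if d x z = i - 1 then br (i - 1) else 0)))"
    using card_nbrs_in_sphere[OF x] by (simp add: distrib_left sum.distrib)
  finally show ?thesis unfolding shell .
qed

text \<open>distpoly \<theta> i is v_i(\<theta>) for the polynomials v_i with A_i = v_i(A), A_i the distance-i
  matrix. It is only meaningful for i \<le> diam: beyond, c_i may vanish and the division yields 0.\<close>
fun distpoly :: "real \<Rightarrow> nat \<Rightarrow> real" where
  "distpoly \<theta> 0 = 1"
| "distpoly \<theta> (Suc 0) = \<theta>"
| "distpoly \<theta> (Suc (Suc i)) =
    ((\<theta> - ar (Suc i)) * distpoly \<theta> (Suc i) - br i * distpoly \<theta> i) / cr (Suc (Suc i))"

lemma one_le_cr: "1 \<le> i \<Longrightarrow> i \<le> diam \<Longrightarrow> 1 \<le> cr i"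
proof -
  assume i: "1 \<le> i" "i \<le> diam"
  then obtain x y where xy: "x \<in> V" "y \<in> V" "d x y = i" using exists_pair_at_gdist by blast
  obtain m where m: "i = Suc m" using i by (cases i) auto
  obtain z where "z \<in> V" "E y z" "d x z = m" using gdist_SucE[OF xy(1,2)] xy m by metis
  then have "z \<in> c_set V E x y" unfolding c_set_def using xy m by auto
  moreover have "finite (c_set V E x y)" unfolding c_set_def using finite_V by auto
  ultimately have "card (c_set V E x y) \<noteq> 0" by auto
  then show ?thesis unfolding cr_def using card_c_set[OF xy(1,2)] xy by simp
qed

lemma sphere_sum_distpoly:
  assumes g: "in_eigenspace g \<theta>" and x: "x \<in> V"
  shows "i \<le> diam \<Longrightarrow> sphere_sum g x i = distpoly \<theta> i * g x"
proof (induction i rule: induct_nat_012)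
  case 0
  show ?case unfolding sphere_sum_def using sphere_0[OF x] by simp
next
  case 1
  show ?case using g x sphere_1[OF x] unfolding sphere_sum_def in_eigenspace_def by simp
next
  case (ge2 m)
  have "\<theta> * sphere_sum g x (Suc m) = cr (Suc (Suc m)) * sphere_sum g x (Suc (Suc m))
      + ar (Suc m) * sphere_sum g x (Suc m) + br m * sphere_sum g x m"
    using sphere_sum_recurrence[OF g x, of "Suc m"] by simp
  moreover have "1 \<le> cr (Suc (Suc m))" using one_le_cr ge2.prems by simp
  ultimately show ?case using ge2.IH ge2.prems by (simp add: field_simps)
qed

lemma in_eigenspace_const: "in_eigenspace (\<lambda>_. 1) (real k)"
  unfolding in_eigenspace_def using card_nbrs by simp

lemma card_sphere: "x \<in> V \<Longrightarrow> i \<le> diam \<Longrightarrow> real (card (sphere x i)) = distpoly (real k) i"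
  using sphere_sum_distpoly[OF in_eigenspace_const, of x i] unfolding sphere_sum_def by simp

lemma one_le_distpoly_valency: "i \<le> diam \<Longrightarrow> 1 \<le> distpoly (real k) i"
proof -
  assume i: "i \<le> diam"
  then obtain x y where xy: "x \<in> V" "y \<in> V" "d x y = i" using exists_pair_at_gdist by blast
  then have "y \<in> sphere x i" unfolding sphere_def by simp
  then have "card (sphere x i) \<noteq> 0" using finite_sphere by auto
  then show ?thesis using card_sphere[OF xy(1) i] by simp
qed

lemma card_sphere_balance:
  assumes x: "x \<in> V"
  shows "br i * real (card (sphere x i)) = cr (i + 1) * real (card (sphere x (i + 1)))"
proof (induction i)
  case 0
  show ?case
    using sphere_sum_recurrence[OF in_eigenspace_const x, of 0] cr_0
    unfolding sphere_sum_def ar_def by (simp add: algebra_simps)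
next
  case (Suc i)
  then show ?case
    using sphere_sum_recurrence[OF in_eigenspace_const x, of "Suc i"]
    unfolding sphere_sum_def ar_def by (simp add: algebra_simps)
qed

lemma br_diam: "br diam = 0"
proof -
  obtain x y where xy: "x \<in> V" "y \<in> V" "d x y = diam" using exists_pair_at_gdist by blast
  have "b_set V E x y = {}" unfolding b_set_def using gdist_le_diam[OF xy(1)] xy by fastforce
  then show ?thesis unfolding br_def using card_b_set[OF xy(1,2)] xy by simp
qed

lemma distpoly_recurrence:
  assumes \<theta>: "adj_eigenvalue V E \<theta>" and j: "j \<le> diam"
  shows "\<theta> * distpoly \<theta> j = (if j < diam then cr (j + 1) * distpoly \<theta> (j + 1) else 0)
    + ar j * distpoly \<theta> j + (if j = 0 then 0 else br (j - 1) * distpoly \<theta> (j - 1))"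
proof -
  obtain g x where g: "in_eigenspace g \<theta>" and x: "x \<in> V" "g x \<noteq> 0"
    using \<theta> unfolding adj_eigenvalue_iff by blast
  have "sphere_sum g x (j + 1) = (if j < diam then distpoly \<theta> (j + 1) * g x else 0)"
    using sphere_sum_distpoly[OF g x(1), of "j + 1"] sphere_beyond_diam[OF x(1), of "j + 1"] j
    unfolding sphere_sum_def by auto
  moreover have "j \<noteq> 0 \<Longrightarrow> sphere_sum g x (j - 1) = distpoly \<theta> (j - 1) * g x"
    using sphere_sum_distpoly[OF g x(1), of "j - 1"] j by simp
  ultimately have "(\<theta> * distpoly \<theta> j) * g x = ((if j < diam then cr (j + 1) * distpoly \<theta> (j + 1) else 0)
      + ar j * distpoly \<theta> j + (if j = 0 then 0 else br (j - 1) * distpoly \<theta> (j - 1))) * g x"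
    using sphere_sum_recurrence[OF g x(1), of j] sphere_sum_distpoly[OF g x(1) j]
    by (cases "j = 0"; cases "j < diam") (simp_all add: algebra_simps)
  then show ?thesis using x(2) by simp
qed

definition cosine :: "real \<Rightarrow> nat \<Rightarrow> real" where
  "cosine \<theta> i = distpoly \<theta> i / distpoly (real k) i"

lemma cosine_in_eigenspace:
  assumes \<theta>: "adj_eigenvalue V E \<theta>" and z: "z \<in> V"
  shows "in_eigenspace (\<lambda>x. cosine \<theta> (d z x)) \<theta>"
  unfolding in_eigenspace_def
proof
  fix x assume x: "x \<in> V"
  define j where "j = d z x"
  have j: "j \<le> diam" unfolding j_def using gdist_le_diam z x by simp
  let ?K = "distpoly (real k)" and ?Q = "distpoly \<theta>"
  have Kj: "1 \<le> ?K j" using one_le_distpoly_valency j .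
  have up: "br j * cosine \<theta> (j + 1) = (if j < diam then cr (j + 1) * ?Q (j + 1) / ?K j else 0)"
  proof (cases "j < diam")
    case True
    have "br j * ?K j = cr (j + 1) * ?K (j + 1)"
      using card_sphere_balance[OF z, of j] card_sphere[OF z] j True by simp
    moreover have "1 \<le> ?K (j + 1)" using one_le_distpoly_valency True by simp
    ultimately show ?thesis using True Kj unfolding cosine_def by (simp add: field_simps)
  qed (use j br_diam in simp)
  have down: "cr j * cosine \<theta> (j - 1) = (if j = 0 then 0 else br (j - 1) * ?Q (j - 1) / ?K j)"
  proof (cases "j = 0")
    case False
    have "br (j - 1) * ?K (j - 1) = cr j * ?K j"
      using card_sphere_balance[OF z, of "j - 1"] card_sphere[OF z] j False by simp
    moreover have "1 \<le> ?K (j - 1)" using one_le_distpoly_valency j by simp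
    ultimately show ?thesis using False Kj unfolding cosine_def by (simp add: field_simps)
  qed (use cr_0 in simp)
  have "(\<Sum>y\<in>nbrs x. cosine \<theta> (d z y)) = cr j * cosine \<theta> (j - 1) + ar j * cosine \<theta> j + br j * cosine \<theta> (j + 1)"
    using sum_nbrs_gdist[OF x z] unfolding j_def .
  also have "\<dots> = ((if j < diam then cr (j + 1) * ?Q (j + 1) else 0) + ar j * ?Q j
      + (if j = 0 then 0 else br (j - 1) * ?Q (j - 1))) / ?K j"
    unfolding up down using Kj by (simp add: cosine_def field_simps)
  also have "\<dots> = \<theta> * cosine \<theta> (d z x)"
    using distpoly_recurrence[OF \<theta> j] unfolding cosine_def j_def by simp
  finally show "(\<Sum>y\<in>nbrs x. cosine \<theta> (d z y)) = \<theta> * cosine \<theta> (d z x)" .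
qed

definition cosine_norm :: "real \<Rightarrow> real" where
  "cosine_norm \<theta> = (\<Sum>i\<le>diam. cosine \<theta> i * distpoly \<theta> i)"

lemma one_le_cosine_norm: "1 \<le> cosine_norm \<theta>"
proof -
  have "cosine \<theta> 0 * distpoly \<theta> 0 \<le> (\<Sum>i\<le>diam. cosine \<theta> i * distpoly \<theta> i)"
  proof (rule member_le_sum)
    fix i assume "i \<in> {..diam} - {0}"
    then have "1 \<le> distpoly (real k) i" using one_le_distpoly_valency by simp
    then show "0 \<le> cosine \<theta> i * distpoly \<theta> i" unfolding cosine_def by (simp add: field_simps)
  qed auto
  then show ?thesis unfolding cosine_norm_def cosine_def by simp
qed

lemma cosine_kernel_on_eigenspace:
  assumes w: "in_eigenspace w \<theta>" and x: "x \<in> V"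
  shows "(\<Sum>z\<in>V. cosine \<theta> (d x z) * w z) = cosine_norm \<theta> * w x"
proof -
  have "d x ` V \<subseteq> {..diam}" using gdist_le_diam[OF x] by auto
  then have "(\<Sum>z\<in>V. cosine \<theta> (d x z) * w z)
      = (\<Sum>i\<le>diam. \<Sum>z\<in>{z\<in>V. d x z = i}. cosine \<theta> (d x z) * w z)"
    by (rule sum.group[OF finite_V finite_atMost, symmetric])
  also have "\<dots> = (\<Sum>i\<le>diam. cosine \<theta> i * sphere_sum w x i)"
    unfolding sphere_sum_def sphere_def by (simp add: sum_distrib_left)
  also have "\<dots> = (\<Sum>i\<le>diam. cosine \<theta> i * distpoly \<theta> i * w x)"
    using sphere_sum_distpoly[OF w x] by (simp add: mult.assoc)
  finally show ?thesis unfolding cosine_norm_def by (simp add: sum_distrib_right)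
qed

text \<open>With M the matrix (cosine \<theta> (d x z)), the vector w = M 1_C lies in the
  \<theta>-eigenspace, on which M acts as multiplication by cosine_norm \<theta> > 0; hence
  1_C' M 1_C = |w|^2 / cosine_norm \<theta> \<ge> 0.\<close>
lemma cosine_clique_sum_nonneg:
  assumes \<theta>: "adj_eigenvalue V E \<theta>" and C: "C \<subseteq> V"
  shows "0 \<le> (\<Sum>z\<in>C. \<Sum>z'\<in>C. cosine \<theta> (d z' z))"
proof -
  define w where "w x = (\<Sum>z'\<in>C. cosine \<theta> (d z' x))" for x
  have w: "in_eigenspace w \<theta>"
    unfolding in_eigenspace_def
  proof
    fix x assume x: "x \<in> V"
    have "(\<Sum>y\<in>nbrs x. w y) = (\<Sum>z'\<in>C. \<Sum>y\<in>nbrs x. cosine \<theta> (d z' y))"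
      unfolding w_def by (rule sum.swap)
    also have "\<dots> = (\<Sum>z'\<in>C. \<theta> * cosine \<theta> (d z' x))"
      using cosine_in_eigenspace[OF \<theta>] C x unfolding in_eigenspace_def by (intro sum.cong) auto
    finally show "(\<Sum>y\<in>nbrs x. w y) = \<theta> * w x"
      unfolding w_def by (simp add: sum_distrib_left)
  qed
  have "0 \<le> (\<Sum>x\<in>V. w x * w x)" by (intro sum_nonneg) simp
  also have "\<dots> = (\<Sum>z'\<in>C. \<Sum>x\<in>V. cosine \<theta> (d z' x) * w x)"
    unfolding w_def by (simp add: sum_distrib_right sum.swap[of _ V])
  also have "\<dots> = cosine_norm \<theta> * (\<Sum>z\<in>C. w z)"
    using cosine_kernel_on_eigenspace[OF w] C by (auto simp: sum_distrib_left intro: sum.cong)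
  finally have "0 \<le> cosine_norm \<theta> * (\<Sum>z\<in>C. w z)" .
  then show ?thesis
    using one_le_cosine_norm[of \<theta>] unfolding w_def by (simp add: zero_le_mult_iff)
qed

lemma delsarte_bound:
  assumes \<theta>: "adj_eigenvalue V E \<theta>" and neg: "\<theta> < 0" and C: "clique V E C"
  shows "real (card C) \<le> 1 + real k / (- \<theta>)"
proof (cases "C = {}")
  case False
  have CV: "C \<subseteq> V" using C unfolding clique_def by auto
  then have fin: "finite C" using finite_V finite_subset by blast
  define n where "n = real (card C)"
  have n: "0 < n" unfolding n_def using False fin by (simp add: card_gt_0_iff)
  have "(\<Sum>z'\<in>C. cosine \<theta> (d z' z)) = 1 + (n - 1) * (\<theta> / real k)" if z: "z \<in> C" for z
  proof -
    have "E z' z" if "z' \<in> C - {z}" for z'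
      using C that z unfolding clique_def by blast
    then have "(\<Sum>z'\<in>C - {z}. cosine \<theta> (d z' z)) = (\<Sum>z'\<in>C - {z}. cosine \<theta> 1)"
      by (intro sum.cong refl) (simp add: gdist_adj)
    moreover have "real (card (C - {z})) = n - 1"
    proof -
      have "0 < card C" using z fin card_gt_0_iff by blast
      then show ?thesis unfolding n_def using z by (simp add: of_nat_diff)
    qed
    ultimately have "(\<Sum>z'\<in>C - {z}. cosine \<theta> (d z' z)) = (n - 1) * cosine \<theta> 1" by simp
    then show ?thesis
      using sum.remove[OF fin z, of "\<lambda>z'. cosine \<theta> (d z' z)"] unfolding cosine_def by simp
  qed
  then have "0 \<le> n * (1 + (n - 1) * (\<theta> / real k))"
    using cosine_clique_sum_nonneg[OF \<theta> CV] unfolding n_def by simp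
  then have "0 \<le> 1 + (n - 1) * (\<theta> / real k)" using n by (simp add: zero_le_mult_iff)
  then have "(n - 1) * (- \<theta>) \<le> real k" using valency_pos by (simp add: field_simps)
  then show ?thesis using neg unfolding n_def by (simp add: field_simps)
qed (use neg in simp)

lemma valency_adj_eigenvalue: "adj_eigenvalue V E (real k)"
  unfolding adj_eigenvalue_iff
  by (intro exI[of _ "\<lambda>_. 1"]) (use in_eigenspace_const V_nonempty in auto)

lemma theta_min_adj_eigenvalue: "adj_eigenvalue V E (theta_min V E)"
proof -
  have "theta_min V E \<in> {\<theta>. adj_eigenvalue V E \<theta>}"
    unfolding theta_min_def
    using finite_adj_eigenvalues[OF finite_V] valency_adj_eigenvalue by (intro Min_in) auto
  then show ?thesis by simp
qed

end

section \<open>Point graphs of partial linear spaces\<close>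

locale point_graph = finite_graph +
  fixes L :: "'a set set" and s :: nat
  assumes line_clique: "l \<in> L \<Longrightarrow> clique V E l"
    and line_unique: "\<lbrakk>l \<in> L; l' \<in> L; x \<noteq> y; x \<in> l; y \<in> l; x \<in> l'; y \<in> l'\<rbrakk> \<Longrightarrow> l = l'"
    and adj_iff_collinear: "\<lbrakk>x \<in> V; y \<in> V; x \<noteq> y\<rbrakk> \<Longrightarrow> E x y \<longleftrightarrow> (\<exists>l\<in>L. x \<in> l \<and> y \<in> l)"
    and card_lines_through_le: "x \<in> V \<Longrightarrow> card {l\<in>L. x \<in> l} \<le> s"
begin

definition lines_through :: "'a \<Rightarrow> 'a set set" where
  "lines_through x = {l\<in>L. x \<in> l}"

lemma line_subset_V: "l \<in> L \<Longrightarrow> l \<subseteq> V"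
  using line_clique unfolding clique_def by auto

lemma finite_line: "l \<in> L \<Longrightarrow> finite l"
  using line_subset_V finite_V finite_subset by blast

lemma line_adj: "\<lbrakk>l \<in> L; x \<in> l; y \<in> l; x \<noteq> y\<rbrakk> \<Longrightarrow> E x y"
  using line_clique unfolding clique_def by auto

lemma finite_lines: "finite L"
  using finite_subset[of L "Pow V"] line_subset_V finite_V by auto

lemma finite_lines_through: "finite (lines_through x)"
  unfolding lines_through_def using finite_lines by simp

lemma nbrs_eq_UN_lines: "x \<in> V \<Longrightarrow> nbrs x = (\<Union>l\<in>lines_through x. l - {x})"
proof
  assume x: "x \<in> V"
  show "nbrs x \<subseteq> (\<Union>l\<in>lines_through x. l - {x})"
  proof
    fix y assume "y \<in> nbrs x"
    then have y: "y \<in> V" "E x y" unfolding nbrs_def by auto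
    then have "x \<noteq> y" using adj_irrefl by auto
    then obtain l where "l \<in> L" "x \<in> l" "y \<in> l" using adj_iff_collinear x y by blast
    then show "y \<in> (\<Union>l\<in>lines_through x. l - {x})"
      unfolding lines_through_def using \<open>x \<noteq> y\<close> by auto
  qed
  show "(\<Union>l\<in>lines_through x. l - {x}) \<subseteq> nbrs x"
    unfolding lines_through_def nbrs_def using line_adj line_subset_V by blast
qed

lemma lines_through_disjoint:
  "\<lbrakk>l \<in> lines_through x; l' \<in> lines_through x; l \<noteq> l'\<rbrakk> \<Longrightarrow> (l - {x}) \<inter> (l' - {x}) = {}"
  unfolding lines_through_def using line_unique by blast

lemma sum_nbrs_lines:
  "x \<in> V \<Longrightarrow> (\<Sum>y\<in>nbrs x. f y) = (\<Sum>l\<in>lines_through x. \<Sum>y\<in>l - {x}. f y)"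
  unfolding nbrs_eq_UN_lines
  by (rule sum.UNION_disjoint)
    (use finite_lines_through finite_line lines_through_disjoint in \<open>auto simp: lines_through_def\<close>)

lemma card_nbrs_lines: "x \<in> V \<Longrightarrow> card (nbrs x) = (\<Sum>l\<in>lines_through x. card (l - {x}))"
  unfolding nbrs_eq_UN_lines
  by (rule card_UN_disjoint)
    (use finite_lines_through finite_line lines_through_disjoint in \<open>auto simp: lines_through_def\<close>)

lemma card_nbrs_plus_card_lines_through:
  assumes x: "x \<in> V"
  shows "card (nbrs x) + card (lines_through x) = (\<Sum>l\<in>lines_through x. card l)"
proof -
  have "Suc (card (l - {x})) = card l" if "l \<in> lines_through x" for l
    using that card_Suc_Diff1[OF finite_line, of l x] unfolding lines_through_def by simp
  then have "(\<Sum>l\<in>lines_through x. Suc (card (l - {x}))) = (\<Sum>l\<in>lines_through x. card l)"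
    by (intro sum.cong refl)
  then show ?thesis unfolding card_nbrs_lines[OF x] sum_Suc .
qed

lemma sum_incidences: "(\<Sum>x\<in>V. \<Sum>l\<in>lines_through x. f x l) = (\<Sum>l\<in>L. \<Sum>x\<in>l. f x l)"
proof -
  have "(\<Sum>x\<in>V. \<Sum>l\<in>lines_through x. f x l) = (\<Sum>x\<in>V. \<Sum>l\<in>L. if x \<in> l then f x l else 0)"
    unfolding lines_through_def using finite_lines by (simp add: sum.inter_filter)
  also have "\<dots> = (\<Sum>l\<in>L. \<Sum>x\<in>V. if x \<in> l then f x l else 0)"
    by (rule sum.swap)
  also have "\<dots> = (\<Sum>l\<in>L. \<Sum>x\<in>l. f x l)"
  proof (rule sum.cong[OF refl])
    fix l assume "l \<in> L"
    then have "{x\<in>V. x \<in> l} = l" using line_subset_V by auto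
    then show "(\<Sum>x\<in>V. if x \<in> l then f x l else 0) = (\<Sum>x\<in>l. f x l)"
      using sum.inter_filter[OF finite_V, of "\<lambda>x. f x l" "\<lambda>x. x \<in> l"] by simp
  qed
  finally show ?thesis .
qed

text \<open>With N the point-line incidence matrix, this is A = N N' - diag (card (lines_through x)).\<close>
lemma in_eigenspace_line_identity:
  assumes g: "in_eigenspace g \<theta>"
  shows "\<theta> * (\<Sum>x\<in>V. g x * g x) = (\<Sum>l\<in>L. (\<Sum>y\<in>l. g y) * (\<Sum>y\<in>l. g y))
    - (\<Sum>x\<in>V. real (card (lines_through x)) * (g x * g x))"
proof -
  define T where "T l = (\<Sum>y\<in>l. g y)" for l
  have "\<theta> * (\<Sum>x\<in>V. g x * g x) = (\<Sum>x\<in>V. \<Sum>l\<in>lines_through x. g x * T l - g x * g x)"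
  proof (unfold sum_distrib_left, intro sum.cong refl)
    fix x assume x: "x \<in> V"
    have "(\<Sum>y\<in>nbrs x. g y) = (\<Sum>l\<in>lines_through x. T l - g x)"
      unfolding sum_nbrs_lines[OF x] T_def
      using finite_line by (intro sum.cong refl) (auto simp: lines_through_def sum_diff1)
    moreover have "\<theta> * (g x * g x) = g x * (\<Sum>y\<in>nbrs x. g y)"
      using g x unfolding in_eigenspace_def by (simp add: mult.left_commute)
    ultimately show "\<theta> * (g x * g x) = (\<Sum>l\<in>lines_through x. g x * T l - g x * g x)"
      by (simp add: sum_distrib_left right_diff_distrib)
  qed
  also have "(\<Sum>x\<in>V. \<Sum>l\<in>lines_through x. g x * T l) = (\<Sum>l\<in>L. T l * T l)"
    unfolding sum_incidences T_def by (simp add: sum_distrib_right)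
  then have "(\<Sum>x\<in>V. \<Sum>l\<in>lines_through x. g x * T l - g x * g x)
      = (\<Sum>l\<in>L. T l * T l) - (\<Sum>x\<in>V. real (card (lines_through x)) * (g x * g x))"
    by (simp add: sum_subtractf)
  finally show ?thesis unfolding T_def .
qed

lemma adj_eigenvalue_ge:
  assumes "adj_eigenvalue V E \<theta>"
  shows "- real s \<le> \<theta>"
proof -
  obtain g x0 where g: "in_eigenspace g \<theta>" and x0: "x0 \<in> V" "g x0 \<noteq> 0"
    using assms unfolding adj_eigenvalue_iff by blast
  have "0 \<le> (\<Sum>l\<in>L. (\<Sum>y\<in>l. g y) * (\<Sum>y\<in>l. g y))" by (intro sum_nonneg) simp
  moreover have "(\<Sum>x\<in>V. real (card (lines_through x)) * (g x * g x)) \<le> (\<Sum>x\<in>V. real s * (g x * g x))"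
    using card_lines_through_le unfolding lines_through_def by (intro sum_mono mult_right_mono) auto
  ultimately have "- real s * (\<Sum>x\<in>V. g x * g x) \<le> \<theta> * (\<Sum>x\<in>V. g x * g x)"
    unfolding in_eigenspace_line_identity[OF g] by (simp add: sum_distrib_left sum_negf)
  moreover have "0 < g x0 * g x0" using x0(2) not_real_square_gt_zero by blast
  then have "0 < (\<Sum>x\<in>V. g x * g x)"
    using x0(1) finite_V by (intro sum_pos2[where i = x0]) auto
  ultimately show ?thesis by (metis minus_mult_left mult_le_cancel_right_pos)
qed

end

section \<open>The SPLS property\<close>

lemma two_times_choose_two: "2 * int (n choose 2) = int n * (int n - 1)"
proof -
  have "even (n * (n - 1))" by (cases n) auto
  then have "2 * (n choose 2) = n * (n - 1)" unfolding choose_two by simp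
  then show ?thesis by (cases n) (simp_all add: algebra_simps flip: of_nat_mult)
qed

lemma sum_offdiag_swap:
  assumes "finite A"
  shows "(\<Sum>a\<in>A. \<Sum>b\<in>A - {a}. f b a) = (\<Sum>a\<in>A. \<Sum>b\<in>A - {a}. f a b)"
proof -
  have "A - {a} = {b\<in>A. a \<noteq> b}" "A - {a} = {b\<in>A. b \<noteq> a}" for a by auto
  then show ?thesis using sum.swap_restrict[OF assms assms, of "\<lambda>a b. f b a" "\<lambda>a b. a \<noteq> b"] by simp
qed

locale spls = distance_regular_graph +
  fixes c s :: nat
  assumes SPLS: "SPLS V E c s"
begin

abbreviation L :: "'a set set" where
  "L \<equiv> spls_lines V E c s"

lemma one_le_c: "1 \<le> c"
  using SPLS unfolding SPLS_def by simp

lemma two_le_s: "2 \<le> s"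
  using SPLS unfolding SPLS_def by simp

lemma int_a_1_ge: "(2 * int s - 1) * (int c - 1) \<le> int_a V E 1"
  using SPLS unfolding SPLS_def Let_def by blast

lemma card_adj_on_line_le: "\<lbrakk>x \<in> V; l \<in> L; x \<notin> l\<rbrakk> \<Longrightarrow> card {y\<in>l. E x y} \<le> c"
  using SPLS unfolding SPLS_def Let_def by blast

lemma card_line_ge: "l \<in> L \<Longrightarrow> int_a V E 1 + 2 - (int c - 1) * (int s - 1) \<le> int (card l)"
  unfolding spls_lines_def by auto

sublocale point_graph V E L s
proof
  show "clique V E l" if "l \<in> L" for l
    using that unfolding spls_lines_def maximal_clique_def by auto
  then have "L \<subseteq> Pow V" unfolding clique_def by auto
  then have fin: "finite L" using finite_V finite_subset by blast
  show "l = l'" if "l \<in> L" "l' \<in> L" "x \<noteq> y" "x \<in> l" "y \<in> l" "x \<in> l'" "y \<in> l'" for l l' x y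
  proof -
    have "x \<in> V" "y \<in> V" using that \<open>L \<subseteq> Pow V\<close> by auto
    then have "card {l \<in> L. x \<in> l \<and> y \<in> l} \<le> 1"
      using SPLS that unfolding SPLS_def Let_def by blast
    then show ?thesis using that fin card_le_Suc0_iff_eq[of "{l \<in> L. x \<in> l \<and> y \<in> l}"] by auto
  qed
  show "E x y \<longleftrightarrow> (\<exists>l\<in>L. x \<in> l \<and> y \<in> l)" if "x \<in> V" "y \<in> V" "x \<noteq> y" for x y
    using SPLS that unfolding SPLS_def Let_def by blast
  show "card {l\<in>L. x \<in> l} \<le> s" if "x \<in> V" for x
    using SPLS that unfolding SPLS_def Let_def by blast
qed

lemma two_le_card_line: "l \<in> L \<Longrightarrow> 2 \<le> card l"
proof -
  assume l: "l \<in> L"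
  have "(2 * int s - 1) * (int c - 1) - (int c - 1) * (int s - 1) = int s * (int c - 1)"
    by (simp add: algebra_simps)
  moreover have "0 \<le> int s * (int c - 1)" using one_le_c by simp
  ultimately show ?thesis using card_line_ge[OF l] int_a_1_ge by linarith
qed

lemma neg_theta_min_le: "- theta_min V E \<le> real s"
  using adj_eigenvalue_ge[OF theta_min_adj_eigenvalue] by simp

text \<open>Equality in the Delsarte bound for every line through a vertex is forced by
  k = \<Sum>(|l| - 1) over the at most s lines through it.\<close>
lemma card_line_if_tight:
  assumes tight: "- theta_min V E = real s" and l: "l \<in> L"
  shows "real (card l) = 1 + real k / real s"
proof -
  have neg: "theta_min V E < 0" using tight two_le_s by simp
  have bound: "real (card l') - 1 \<le> real k / real s" if "l' \<in> L" for l'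
    using delsarte_bound[OF theta_min_adj_eigenvalue neg line_clique[OF that]] tight by simp
  obtain x where x: "x \<in> l" using two_le_card_line[OF l] by fastforce
  then have xV: "x \<in> V" and lx: "l \<in> lines_through x"
    using line_subset_V l unfolding lines_through_def by auto
  let ?slack = "\<lambda>l'. real k / real s - (real (card l') - 1)"
  have slack: "0 \<le> ?slack l'" if "l' \<in> lines_through x" for l'
    using bound that unfolding lines_through_def by auto
  have "real k = (\<Sum>l'\<in>lines_through x. real (card l') - 1)"
    using card_nbrs_plus_card_lines_through[OF xV] card_nbrs[OF xV]
    by (simp add: sum_subtractf flip: of_nat_sum)
  then have "(\<Sum>l'\<in>lines_through x. ?slack l') = real (card (lines_through x)) * (real k / real s) - real k"
    by (simp add: sum_subtractf)
  also have "\<dots> \<le> real s * (real k / real s) - real k"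
    using card_lines_through_le[OF xV] unfolding lines_through_def
    by (intro diff_right_mono mult_right_mono) auto
  also have "\<dots> = 0" using two_le_s by simp
  finally have "(\<Sum>l'\<in>lines_through x. ?slack l') = 0"
    using sum_nonneg[of "lines_through x" ?slack, OF slack] by linarith
  then have "?slack l = 0"
    using sum_nonneg_eq_0_iff[OF finite_lines_through, where f = ?slack] slack lx by blast
  then show ?thesis by simp
qed

lemma geometric_if_tight:
  assumes tight: "- theta_min V E = real s"
  shows "geometric V E"
  unfolding geometric_def
proof (intro exI[of _ L] conjI allI impI)
  show "\<forall>C\<in>L. delsarte_clique V E C"
    unfolding delsarte_clique_def using card_line_if_tight[OF tight] line_clique tight by simp
next
  fix x y assume e: "E x y"
  then have "x \<in> V" "y \<in> V" "x \<noteq> y" using adj_in_V adj_irrefl by auto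
  then show "\<exists>!C. C \<in> L \<and> x \<in> C \<and> y \<in> C"
    using adj_iff_collinear e line_unique by metis
qed

lemma int_a_1_le_line_cross:
  assumes x: "x \<in> V" and l: "l \<in> lines_through x" and y: "y \<in> l" "y \<noteq> x"
  shows "int_a V E 1 \<le> int (card l) - 2 + (\<Sum>l'\<in>lines_through x - {l}. int (card (nbrs y \<inter> (l' - {x}))))"
proof -
  have lL: "l \<in> L" "x \<in> l" using l unfolding lines_through_def by auto
  have e: "E x y" using line_adj[OF lL(1) lL(2) y(1)] y by auto
  let ?U = "\<Union>l'\<in>lines_through x - {l}. nbrs y \<inter> (l' - {x})"
  have "nbrs x \<inter> nbrs y \<subseteq> (l - {x, y}) \<union> ?U"
  proof
    fix z assume z: "z \<in> nbrs x \<inter> nbrs y"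
    then obtain l'' where l'': "l'' \<in> lines_through x" "z \<in> l'' - {x}"
      using nbrs_eq_UN_lines[OF x] by auto
    have "z \<noteq> y" using z adj_irrefl unfolding nbrs_def by auto
    then show "z \<in> (l - {x, y}) \<union> ?U" using l'' z by (cases "l'' = l") auto
  qed
  then have "card (nbrs x \<inter> nbrs y) \<le> card ((l - {x, y}) \<union> ?U)"
    using finite_line[OF lL(1)] finite_lines_through finite_nbrs by (intro card_mono) auto
  also have "\<dots> \<le> card (l - {x, y}) + card ?U"
    by (rule card_Un_le)
  also have "card ?U \<le> (\<Sum>l'\<in>lines_through x - {l}. card (nbrs y \<inter> (l' - {x})))"
    using finite_lines_through by (intro card_UN_le) simp
  also have "card (l - {x, y}) = card l - 2"
    using card_Diff_subset[of "{x, y}" l] lL y finite_line by simp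
  finally have "int (card (nbrs x \<inter> nbrs y)) \<le> int (card l - 2)
      + (\<Sum>l'\<in>lines_through x - {l}. int (card (nbrs y \<inter> (l' - {x}))))"
    by (simp flip: of_nat_sum of_nat_add)
  then show ?thesis using card_common_nbrs_adj[OF e] two_le_card_line[OF lL(1)] by simp
qed

lemma card_cross_nbrs_le:
  assumes x: "x \<in> V" and l: "l \<in> lines_through x" and l': "l' \<in> lines_through x"
    and ne: "l \<noteq> l'" and y: "y \<in> l" "y \<noteq> x"
  shows "int (card (nbrs y \<inter> (l' - {x}))) \<le> int c - 1"
proof -
  have lL: "l \<in> L" "x \<in> l" "l' \<in> L" "x \<in> l'" using l l' unfolding lines_through_def by auto
  have "y \<notin> l'" using line_unique[OF lL(1) lL(3) y(2)] lL y ne by auto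
  moreover have yV: "y \<in> V" using line_subset_V lL y by auto
  ultimately have le: "card {z \<in> l'. E y z} \<le> c" using card_adj_on_line_le lL by blast
  have xin: "x \<in> {z \<in> l'. E y z}" using line_adj[OF lL(1) y(1) lL(2)] y lL by simp
  have "nbrs y \<inter> (l' - {x}) = {z \<in> l'. E y z} - {x}"
    unfolding nbrs_def using line_subset_V lL by auto
  moreover have "card ({z \<in> l'. E y z} - {x}) = card {z \<in> l'. E y z} - 1"
    by (rule card_Diff_singleton[OF xin])
  moreover have "finite {z \<in> l'. E y z}" using finite_line[OF lL(3)] by simp
  then have "0 < card {z \<in> l'. E y z}" using xin card_gt_0_iff by (metis empty_iff)
  ultimately show ?thesis using le by simp
qed

text \<open>A single line through x would contain all neighbours of x, forcing a_1 = k - 1, i.e. b_1 = 0.\<close>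
lemma two_le_card_lines_through:
  assumes x: "x \<in> V"
  shows "2 \<le> card (lines_through x)"
proof (rule ccontr)
  assume "\<not> ?thesis"
  then have le1: "card (lines_through x) \<le> 1" by simp
  have "nbrs x \<noteq> {}" using card_nbrs[OF x] valency_pos by auto
  then obtain y l where y: "y \<in> nbrs x" and l: "l \<in> lines_through x" "y \<in> l - {x}"
    using nbrs_eq_UN_lines[OF x] by auto
  have "lines_through x = {l}"
    using le1 l finite_lines_through card_le_Suc0_iff_eq[of "lines_through x"] by auto
  then have k: "k = card (l - {x})" using card_nbrs_lines[OF x] card_nbrs[OF x] by simp
  have lL: "l \<in> L" "x \<in> l" using l unfolding lines_through_def by auto
  have "l - {x, y} \<subseteq> nbrs x \<inter> nbrs y"
    unfolding nbrs_def using line_subset_V lL line_adj l by auto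
  then have "card (l - {x, y}) \<le> card (nbrs x \<inter> nbrs y)" using finite_nbrs by (intro card_mono) auto
  moreover have "l - {x} = insert y (l - {x, y})" using l by auto
  then have "card (l - {x}) = card (l - {x, y}) + 1" using finite_line[OF lL(1)] by simp
  ultimately have "int k - 1 \<le> int_a V E 1"
    using card_common_nbrs_adj y k unfolding nbrs_def by fastforce
  then show False using int_b_1_pos int_c_1 unfolding int_a_def by simp
qed

text \<open>The lines stay the same: counting the common neighbours of two points of a line l through
  x over the at most s - 2 other lines through x gives card l \<ge> a_1 + 2 - (s - 2)(c - 1).\<close>
lemma SPLS_pred:
  assumes s3: "3 \<le> s" and r: "\<forall>x\<in>V. card (lines_through x) \<le> s - 1"
  shows "SPLS V E c (s - 1)"
proof -
  have c1: "0 \<le> int c - 1" using one_le_c by simp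
  have "spls_lines V E c (s - 1) = L"
  proof (intro equalityI subsetI)
    fix l assume l: "l \<in> spls_lines V E c (s - 1)"
    have "(int c - 1) * (int (s - 1) - 1) \<le> (int c - 1) * (int s - 1)"
      using c1 s3 by (intro mult_left_mono) auto
    then show "l \<in> L" using l unfolding spls_lines_def by auto
  next
    fix l assume l: "l \<in> L"
    have "\<not> card l \<le> Suc 0" using two_le_card_line[OF l] by simp
    then obtain x y where xy: "x \<in> l" "y \<in> l" "y \<noteq> x"
      using card_le_Suc0_iff_eq[OF finite_line[OF l]] by blast
    have xV: "x \<in> V" and lx: "l \<in> lines_through x"
      using line_subset_V l xy unfolding lines_through_def by auto
    have "(\<Sum>l'\<in>lines_through x - {l}. int (card (nbrs y \<inter> (l' - {x}))))
        \<le> (\<Sum>l'\<in>lines_through x - {l}. int c - 1)"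
      using card_cross_nbrs_le[OF xV lx _ _ xy(2,3)] by (intro sum_mono) auto
    also have "\<dots> = int (card (lines_through x) - 1) * (int c - 1)"
      using lx finite_lines_through by simp
    also have "\<dots> \<le> (int s - 2) * (int c - 1)"
      using r xV s3 c1 by (intro mult_right_mono) auto
    finally have "int_a V E 1 \<le> int (card l) - 2 + (int s - 2) * (int c - 1)"
      using int_a_1_le_line_cross[OF xV lx xy(2,3)] by linarith
    then show "l \<in> spls_lines V E c (s - 1)"
      using l s3 unfolding spls_lines_def by (auto simp: of_nat_diff algebra_simps)
  qed
  moreover have "(2 * int (s - 1) - 1) * (int c - 1) \<le> int_a V E 1"
    using int_a_1_ge c1 s3 mult_right_mono[of "2 * int (s - 1) - 1" "2 * int s - 1" "int c - 1"]
    by (simp add: of_nat_diff)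
  ultimately show ?thesis
    using SPLS s3 r unfolding SPLS_def Let_def lines_through_def by auto
qed

lemma exists_point_on_s_lines:
  assumes "s = 2 \<or> \<not> SPLS V E c (s - 1)"
  shows "\<exists>x\<in>V. card (lines_through x) = s"
proof (rule ccontr)
  assume "\<not> ?thesis"
  then have r: "\<forall>x\<in>V. card (lines_through x) \<le> s - 1"
    using card_lines_through_le unfolding lines_through_def by fastforce
  show False
  proof (cases "s = 2")
    case True
    obtain x where "x \<in> V" using V_nonempty by blast
    then show False using r two_le_card_lines_through True by fastforce
  next
    case False
    then show False using assms SPLS_pred two_le_s r by simp
  qed
qed

text \<open>Each y l' is adjacent to at most c - 1 points of l - {x}, while the line-size bound
  gives card (l - {x}) \<ge> s (c - 1) + 1.\<close>
lemma exists_line_point_nonadj: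
  assumes x: "x \<in> V" and l: "l \<in> lines_through x"
    and F: "F \<subseteq> lines_through x - {l}" "card F \<le> s - 1" and y: "\<forall>l'\<in>F. y l' \<in> l' \<and> y l' \<noteq> x"
  shows "\<exists>z\<in>l - {x}. \<forall>l'\<in>F. \<not> E (y l') z"
proof -
  have lL: "l \<in> L" "x \<in> l" using l unfolding lines_through_def by auto
  have finF: "finite F" using F finite_lines_through finite_subset by blast
  define Bad where "Bad = (\<Union>l'\<in>F. nbrs (y l') \<inter> (l - {x}))"
  have "card Bad \<le> (\<Sum>l'\<in>F. card (nbrs (y l') \<inter> (l - {x})))"
    unfolding Bad_def by (rule card_UN_le[OF finF])
  then have "int (card Bad) \<le> (\<Sum>l'\<in>F. int (card (nbrs (y l') \<inter> (l - {x}))))"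
    by (simp add: of_nat_sum[symmetric] del: of_nat_sum)
  also have "\<dots> \<le> (\<Sum>l'\<in>F. int c - 1)"
  proof (intro sum_mono)
    fix l' assume "l' \<in> F"
    then show "int (card (nbrs (y l') \<inter> (l - {x}))) \<le> int c - 1"
      using card_cross_nbrs_le[OF x _ l] F y by auto
  qed
  also have "\<dots> \<le> (int s - 1) * (int c - 1)"
    using F(2) one_le_c two_le_s by (simp add: mult_right_mono of_nat_diff)
  finally have bad: "int (card Bad) \<le> (int s - 1) * (int c - 1)" .
  have "int (card (l - {x})) = int (card l) - 1"
    using two_le_card_line[OF lL(1)] lL finite_line by (simp add: of_nat_diff)
  then have "int s * (int c - 1) + 1 \<le> int (card (l - {x}))"
    using card_line_ge[OF lL(1)] int_a_1_ge by (simp add: algebra_simps)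
  then have "int (card Bad) < int (card (l - {x}))" using bad one_le_c by (simp add: algebra_simps)
  then have "card Bad < card (l - {x})" by simp
  moreover have "finite Bad" unfolding Bad_def using finF finite_nbrs by simp
  ultimately have "\<not> l - {x} \<subseteq> Bad" using card_mono[of Bad "l - {x}"] by auto
  then obtain z where z: "z \<in> l - {x}" "z \<notin> Bad" by auto
  then show ?thesis using lL line_subset_V unfolding Bad_def nbrs_def by blast
qed

lemma nonadjacent_transversal:
  assumes x: "x \<in> V" and F: "F \<subseteq> lines_through x" and rs: "card (lines_through x) = s"
  shows "\<exists>y. (\<forall>l\<in>F. y l \<in> l \<and> y l \<noteq> x) \<and> (\<forall>l\<in>F. \<forall>l'\<in>F. l \<noteq> l' \<longrightarrow> \<not> E (y l) (y l'))"
proof -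
  have "finite F" using F finite_lines_through finite_subset by blast
  then show ?thesis using F
  proof (induction F rule: finite_subset_induct')
    case (insert l F)
    obtain y where y: "\<forall>l\<in>F. y l \<in> l \<and> y l \<noteq> x" "\<forall>l\<in>F. \<forall>l'\<in>F. l \<noteq> l' \<longrightarrow> \<not> E (y l) (y l')"
      using insert.IH by blast
    have "card (insert l F) \<le> card (lines_through x)"
      using insert.hyps by (intro card_mono finite_lines_through) auto
    then have "card F \<le> s - 1" using insert.hyps rs by simp
    moreover have "F \<subseteq> lines_through x - {l}" using insert.hyps by blast
    ultimately obtain z where z: "z \<in> l - {x}" "\<forall>l'\<in>F. \<not> E (y l') z"
      using exists_line_point_nonadj[OF x insert.hyps(2) _ _ y(1)] by blast
    have nb: "\<not> E (y l') z \<and> \<not> E z (y l')" if "l' \<in> F" for l'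
      using z(2) that adj_sym[of z "y l'"] by blast
    have "\<forall>l1\<in>insert l F. (y(l := z)) l1 \<in> l1 \<and> (y(l := z)) l1 \<noteq> x"
      using y(1) z(1) by auto
    moreover have "\<forall>l1\<in>insert l F. \<forall>l2\<in>insert l F. l1 \<noteq> l2 \<longrightarrow> \<not> E ((y(l := z)) l1) ((y(l := z)) l2)"
      using y(2) nb insert.hyps(4) by auto
    ultimately show ?case by blast
  qed simp
qed

lemma cross_pair_bound:
  assumes x: "x \<in> V" and l: "l \<in> lines_through x" and l': "l' \<in> lines_through x" and ne: "l \<noteq> l'"
    and y1: "y1 \<in> l" "y1 \<noteq> x" and y2: "y2 \<in> l'" "y2 \<noteq> x" and nonadj: "\<not> E y1 y2"
  shows "int (card (nbrs y1 \<inter> (l' - {x}))) + int (card (nbrs y2 \<inter> (l - {x}))) \<le> int (int_c V E 2) - 1"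
proof -
  have lL: "l \<in> L" "x \<in> l" "l' \<in> L" "x \<in> l'" using l l' unfolding lines_through_def by auto
  have yV: "y1 \<in> V" "y2 \<in> V" using line_subset_V lL y1 y2 by auto
  have "y1 \<noteq> y2" using line_unique[OF lL(1) lL(3) y1(2)] ne y1 y2 lL by auto
  have e1: "E y1 x" and e2: "E y2 x" using line_adj lL y1 y2 by auto
  have "d y1 y2 \<le> 2" using gdist_triangle[OF yV(1) x yV(2)] gdist_adj e1 adj_sym[OF e2] by simp
  moreover have "d y1 y2 \<noteq> 0" "d y1 y2 \<noteq> 1"
    using gdist_eq_0_iff gdist_eq_1_iff yV \<open>y1 \<noteq> y2\<close> nonadj by auto
  ultimately have "d y1 y2 = 2" by simp
  then have c2: "card (nbrs y1 \<inter> nbrs y2) = int_c V E 2" using card_common_nbrs_gdist_2 yV by simp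
  define A where "A = nbrs y1 \<inter> (l' - {x})"
  define B where "B = nbrs y2 \<inter> (l - {x})"
  have "A \<subseteq> nbrs y2" unfolding A_def nbrs_def using line_adj[OF lL(3) y2(1)] nonadj adj_sym by blast
  moreover have "B \<subseteq> nbrs y1" unfolding B_def nbrs_def using line_adj[OF lL(1) y1(1)] nonadj adj_sym by blast
  moreover have "x \<in> nbrs y1 \<inter> nbrs y2" unfolding nbrs_def using e1 e2 x by simp
  ultimately have "insert x (A \<union> B) \<subseteq> nbrs y1 \<inter> nbrs y2" unfolding A_def B_def by auto
  then have "card (insert x (A \<union> B)) \<le> int_c V E 2" using c2 finite_nbrs by (metis card_mono finite_Int)
  moreover have "A \<inter> B = {}" "x \<notin> A \<union> B"
    unfolding A_def B_def using lines_through_disjoint[OF l l' ne] by auto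
  moreover have "finite A" "finite B" unfolding A_def B_def using finite_nbrs by auto
  ultimately show ?thesis unfolding A_def B_def by (simp add: card_Un_disjoint)
qed


lemma int_a_1_valency_bound:
  assumes x: "x \<in> V" and rs: "card (lines_through x) = s"
  shows "int s * (int_a V E 1 + 1) - int k \<le> (int (int_c V E 2) - 1) * int (s choose 2)"
proof -
  let ?Lx = "lines_through x"
  obtain y where y: "\<forall>l\<in>?Lx. y l \<in> l \<and> y l \<noteq> x" "\<forall>l\<in>?Lx. \<forall>l'\<in>?Lx. l \<noteq> l' \<longrightarrow> \<not> E (y l) (y l')"
    using nonadjacent_transversal[OF x order_refl rs] by blast
  define m where "m l l' = int (card (nbrs (y l) \<inter> (l' - {x})))" for l l'
  define T where "T = (\<Sum>l\<in>?Lx. \<Sum>l'\<in>?Lx - {l}. m l l')"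
  have "int s * (int_a V E 1 + 1) - int k = (\<Sum>l\<in>?Lx. int_a V E 1 + 2 - int (card l))"
    using card_nbrs_plus_card_lines_through[OF x] card_nbrs[OF x] rs
    by (simp add: sum_subtractf sum.distrib algebra_simps flip: of_nat_sum)
  also have "\<dots> \<le> T"
    unfolding T_def m_def using int_a_1_le_line_cross[OF x] y(1) by (intro sum_mono) fastforce
  finally have T: "int s * (int_a V E 1 + 1) - int k \<le> T" .
  have "2 * T = (\<Sum>l\<in>?Lx. \<Sum>l'\<in>?Lx - {l}. m l l' + m l' l)"
    unfolding T_def using sum_offdiag_swap[OF finite_lines_through, of m] by (simp add: sum.distrib)
  also have "\<dots> \<le> (\<Sum>l\<in>?Lx. \<Sum>l'\<in>?Lx - {l}. int (int_c V E 2) - 1)"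
  proof (intro sum_mono)
    fix l l' assume l: "l \<in> ?Lx" and l': "l' \<in> ?Lx - {l}"
    then have "l' \<in> ?Lx" "l \<noteq> l'" by auto
    then show "m l l' + m l' l \<le> int (int_c V E 2) - 1"
      unfolding m_def using cross_pair_bound[OF x l \<open>l' \<in> ?Lx\<close> \<open>l \<noteq> l'\<close>] y l by auto
  qed
  also have "\<dots> = int s * (int s - 1) * (int (int_c V E 2) - 1)"
    using rs finite_lines_through two_le_s by (simp add: of_nat_diff)
  also have "\<dots> = 2 * ((int (int_c V E 2) - 1) * int (s choose 2))"
    unfolding two_times_choose_two[of s, symmetric] by (simp add: algebra_simps)
  finally show ?thesis using T by linarith
qed

end

theorem lemma12:
  fixes V :: "'a set" and E :: "'a \<Rightarrow> 'a \<Rightarrow> bool" and s :: nat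
  assumes "distance_regular V E" and "diameter_ge2 V E"
    and "s \<ge> 2" and "SPLS_s V E s"
  shows "- theta_min V E \<le> real s
    \<and> (- theta_min V E = real s \<longrightarrow> geometric V E)
    \<and> (\<forall>\<sigma>::nat. \<sigma> \<ge> 2 \<and> SPLS_s V E \<sigma> \<and> (\<forall>t. 2 \<le> t \<and> t < \<sigma> \<longrightarrow> \<not> SPLS_s V E t) \<longrightarrow>
         int \<sigma> * (int_a V E 1 + 1) - int (valency V E)
           \<le> (int (int_c V E 2) - 1) * int (\<sigma> choose 2)
         \<and> real \<sigma> \<ge> - theta_min V E)"
proof -
  interpret distance_regular_graph V E using assms(1,2) by unfold_locales
  have spls_if_SPLS_s: "spls V E (int_c V E 2) t" if "SPLS_s V E t" for t
    using assms(1,2) that unfolding SPLS_s_def by unfold_locales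
  interpret S: spls V E "int_c V E 2" s using spls_if_SPLS_s assms(4) .
  have "int \<sigma> * (int_a V E 1 + 1) - int k \<le> (int (int_c V E 2) - 1) * int (\<sigma> choose 2)
      \<and> - theta_min V E \<le> real \<sigma>"
    if "2 \<le> \<sigma>" "SPLS_s V E \<sigma>" and min: "\<forall>t. 2 \<le> t \<and> t < \<sigma> \<longrightarrow> \<not> SPLS_s V E t" for \<sigma>
  proof -
    interpret T: spls V E "int_c V E 2" \<sigma> using spls_if_SPLS_s that(2) .
    have "\<sigma> = 2 \<or> \<not> SPLS V E (int_c V E 2) (\<sigma> - 1)"
    proof (cases "\<sigma> = 2")
      case False
      then have "2 \<le> \<sigma> - 1" "\<sigma> - 1 < \<sigma>" using that(1) by auto
      then show ?thesis using min unfolding SPLS_s_def by blast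
    qed simp
    then obtain x where "x \<in> V" "card (T.lines_through x) = \<sigma>"
      using T.exists_point_on_s_lines by blast
    then show ?thesis using T.int_a_1_valency_bound T.neg_theta_min_le by blast
  qed
  then show ?thesis using S.neg_theta_min_le S.geometric_if_tight by blast
qed

end
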